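(* Among all allowed 3-stick folded ribbon unknots $K_{w,F}$ in which the folds at all three vertices are of the same type, the minimum ribbonlength is $3\sqrt{3}$, and it is attained when the knot diagram is an equilateral triangle.
   Context: For an oriented polygonal knot diagram $K$ that is a triangle with vertices $v_1,v_2,v_3$ and edges $e_i=[v_i,v_{i+1}]$ (indices mod 3), the fold angle $\theta_i\in[0,\pi]$ at $v_i$ is the angle between $e_{i-1}$ and $e_i$. The folded ribbon $K_w$ of width $w$ has at each $v_i$ a fold line of length $w/\cos(\theta_i/2)$ centered at $v_i$ perpendicular to the bisector of $\theta_i$, with boundary segments parallel to and at distance $w/2$ from each edge joining consecutive fold lines. Folding information $F$ records at each vertex whether the ribbon of $e_i$ lies over (overfold) or under (underfold) the ribbon of $e_{i-1}$; folds of the same type means all overfolds or all underfolds. $K_{w,F}$ is allowed if the ribbon is immersed away from fold lines and admits crossing information (a continuous, antisymmetric, transitive $\pm1$-valued function on pairs of distinct points of the ribbon with the same planar image) agreeing with $F$. The ribbonlength is $\operatorname{length}(K)/w$. *)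

theory Defs
  imports "HOL-Analysis.Analysis"
begin

text \<open>A 3-stick knot diagram is a triangle with vertices v 0, v 1, v 2 in the plane
(modelled as complex numbers); indices are taken mod 3.  Edge e_i = [v i, v (nx i)].\<close>

definition nx :: "nat \<Rightarrow> nat" where "nx i = (i + 1) mod 3"
definition pv :: "nat \<Rightarrow> nat" where "pv i = (i + 2) mod 3"

definition fold_angle :: "(nat \<Rightarrow> complex) \<Rightarrow> nat \<Rightarrow> real" where
  "fold_angle v i = arccos (((v (pv i) - v i) \<bullet> (v (nx i) - v i)) /
                             (norm (v (pv i) - v i) * norm (v (nx i) - v i)))"

definition bisector :: "(nat \<Rightarrow> complex) \<Rightarrow> nat \<Rightarrow> complex" where
  "bisector v i = sgn (v (pv i) - v i) + sgn (v (nx i) - v i)"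

definition fold_seg :: "(nat \<Rightarrow> complex) \<Rightarrow> real \<Rightarrow> nat \<Rightarrow> complex set" where
  "fold_seg v w i =
     (let h = w / (2 * cos (fold_angle v i / 2));
          d = \<i> * sgn (bisector v i)
      in closed_segment (v i - of_real h * d) (v i + of_real h * d))"

definition edge_offset :: "(nat \<Rightarrow> complex) \<Rightarrow> nat \<Rightarrow> complex \<Rightarrow> real" where
  "edge_offset v i p = Im (cnj (sgn (v (nx i) - v i)) * (p - v i))"

text \<open>The piece of the folded ribbon K_w belonging to edge e_i: the quadrilateral bounded by the
fold lines at v_i and v_(i+1) and by the two boundary segments parallel to e_i at distance w/2.
The ribbon is taken open in the width direction (the two boundary segments are removed).\<close>
definition piece :: "(nat \<Rightarrow> complex) \<Rightarrow> real \<Rightarrow> nat \<Rightarrow> complex set" where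
  "piece v w i = {p \<in> convex hull (fold_seg v w i \<union> fold_seg v w (nx i)).
                    \<bar>edge_offset v i p\<bar> < w / 2}"

text \<open>The ribbon is immersed away from the fold lines: each piece is a genuine (non self-crossing)
quadrilateral, i.e. the two fold lines bounding it are disjoint.\<close>
definition immersed_away_from_folds :: "(nat \<Rightarrow> complex) \<Rightarrow> real \<Rightarrow> bool" where
  "immersed_away_from_folds v w \<longleftrightarrow>
     (\<forall>i<3. fold_seg v w i \<inter> fold_seg v w (nx i) = {})"

definition shared :: "nat \<Rightarrow> nat \<Rightarrow> nat" where
  "shared i j = (if j = nx i then nx i else i)"

text \<open>Ribbon points are pairs (i,p) with p in piece i; (i,p) and (j,p) (i \<noteq> j) are the same ribbon
point iff p lies on the fold line they share.  pdom v w i j p says that (i,p) and (j,p) are two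
distinct ribbon points with the same planar image p.\<close>
definition pdom :: "(nat \<Rightarrow> complex) \<Rightarrow> real \<Rightarrow> nat \<Rightarrow> nat \<Rightarrow> complex \<Rightarrow> bool" where
  "pdom v w i j p \<longleftrightarrow> i < 3 \<and> j < 3 \<and> i \<noteq> j \<and> p \<in> piece v w i \<and> p \<in> piece v w j \<and>
                       p \<notin> fold_seg v w (shared i j)"

text \<open>Crossing information: C i j p = 1 means that the ribbon point (i,p) lies over (j,p).\<close>
definition crossing_info ::
  "(nat \<Rightarrow> complex) \<Rightarrow> real \<Rightarrow> (nat \<Rightarrow> nat \<Rightarrow> complex \<Rightarrow> real) \<Rightarrow> bool" where
  "crossing_info v w C \<longleftrightarrow>
     (\<forall>i j p. pdom v w i j p \<longrightarrow> C i j p = 1 \<or> C i j p = -1) \<and>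
     (\<forall>i j p. pdom v w i j p \<longrightarrow> C j i p = - C i j p) \<and>
     (\<forall>i i' j p. pdom v w i j p \<and> pdom v w i' j p \<and> i \<noteq> i' \<and> p \<in> fold_seg v w (shared i i')
         \<longrightarrow> C i j p = C i' j p) \<and>
     (\<forall>i j. i < 3 \<and> j < 3 \<and> i \<noteq> j \<longrightarrow> continuous_on {p. pdom v w i j p} (C i j)) \<and>
     (\<forall>i j k p. pdom v w i j p \<and> pdom v w j k p \<and> pdom v w i k p \<and>
         C i j p = 1 \<and> C j k p = 1 \<longrightarrow> C i k p = 1)"

text \<open>Folding information F: F i = True means an overfold at v_i (ribbon of e_i over ribbon of
e_(i-1)), F i = False an underfold.\<close>
definition agrees_with_folds ::
  "(nat \<Rightarrow> complex) \<Rightarrow> real \<Rightarrow> (nat \<Rightarrow> bool) \<Rightarrow> (nat \<Rightarrow> nat \<Rightarrow> complex \<Rightarrow> real) \<Rightarrow> bool" where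
  "agrees_with_folds v w F C \<longleftrightarrow>
     (\<forall>i<3. \<exists>\<epsilon>>0. \<forall>p. pdom v w i (pv i) p \<and> infdist p (fold_seg v w i) < \<epsilon> \<longrightarrow>
                    C i (pv i) p = (if F i then 1 else -1))"

definition allowed :: "(nat \<Rightarrow> complex) \<Rightarrow> real \<Rightarrow> (nat \<Rightarrow> bool) \<Rightarrow> bool" where
  "allowed v w F \<longleftrightarrow> immersed_away_from_folds v w \<and>
                      (\<exists>C. crossing_info v w C \<and> agrees_with_folds v w F C)"

definition same_type :: "(nat \<Rightarrow> bool) \<Rightarrow> bool" where
  "same_type F \<longleftrightarrow> F 0 = F 1 \<and> F 1 = F 2"

definition ribbonlength :: "(nat \<Rightarrow> complex) \<Rightarrow> real \<Rightarrow> real" where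
  "ribbonlength v w = (dist (v 0) (v 1) + dist (v 1) (v 2) + dist (v 2) (v 0)) / w"

definition equilateral :: "(nat \<Rightarrow> complex) \<Rightarrow> bool" where
  "equilateral v \<longleftrightarrow> dist (v 0) (v 1) = dist (v 1) (v 2) \<and> dist (v 1) (v 2) = dist (v 2) (v 0)"

end

theory Submission
  imports Defs
begin

text \<open>
The perimeter L and twice the signed area D of a triangle satisfy
108 D^2 \<le> L^4, so a ribbonlength L/w below 3\<surd>3 forces the inradius \<bar>D\<bar>/L below w/2.
Then the incenter lies in all three pieces of the ribbon and on none of the fold lines.  The
open segment from v_k to the incenter lies in the overlap of pieces k and k-1, so by
continuity the crossing information between them is constant along it and, near v_k, is
prescribed by the fold at v_k.  If all folds have the same type, the three pieces therefore lie
cyclically over one another at the incenter, which contradicts transitivity.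

For an equilateral triangle of side s and w = s/\<surd>3 the inradius is exactly w/2,
so no point lies in all three (open) pieces, the fold lines have length 2s/3 and are disjoint,
and the crossing information "the piece of e_i lies over that of e_(i-1)", with the sign of the
folds, is consistent.
\<close>

section \<open>Planar vector algebra\<close>

lemma cmod_add_power2: "(cmod (x + y))\<^sup>2 = (cmod x)\<^sup>2 + (cmod y)\<^sup>2 + 2 * Re (cnj x * y)"
  unfolding cmod_power2 by (simp add: power2_eq_square algebra_simps)

lemma abs_Re_cnj_mult_le: "\<bar>Re (cnj x * y)\<bar> \<le> cmod x * cmod y"
  by (metis abs_Re_le_cmod complex_mod_cnj norm_mult)

lemma Re_of_real_mult: "Re (of_real r * z) = r * Re z"
  by simp

lemma Re_cnj_mult_lin:
  "Re (cnj b * (of_real s * x + of_real t * y)) = s * Re (cnj b * x) + t * Re (cnj b * y)"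
  by (simp add: algebra_simps)

lemma Im_cnj_mult_lin:
  "Im (cnj b * (of_real s * x + of_real t * y)) = s * Im (cnj b * x) + t * Im (cnj b * y)"
  by (simp add: algebra_simps)

lemma Re_cnj_add_mult_right_unit: "cmod b = 1 \<Longrightarrow> Re (cnj (a + b) * b) = 1 + Re (cnj a * b)"
  using cmod_power2[of b] by (simp add: power2_eq_square algebra_simps)

lemma Re_cnj_add_mult_left_unit: "cmod a = 1 \<Longrightarrow> Re (cnj (a + b) * a) = 1 + Re (cnj a * b)"
  using cmod_power2[of a] by (simp add: power2_eq_square algebra_simps)

lemma real_multiple_of_unit:
  assumes "cmod u = 1" "Im (cnj u * z) = 0"
  shows "z = of_real (Re (cnj u * z)) * u"
proof -
  have "cnj u * z = of_real (Re (cnj u * z))" using assms(2) by (simp add: complex_eq_iff)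
  moreover have "u * cnj u = 1"
    using assms(1) by (metis complex_norm_square mult.commute of_real_1 power_one complex_mult_cnj)
  ultimately show ?thesis by (metis mult.assoc mult.commute mult_1)
qed

lemma centred_segment_mem:
  fixes H P :: complex
  assumes "\<bar>t\<bar> \<le> 1"
  shows "P + of_real t * H \<in> closed_segment (P - H) (P + H)"
proof -
  have "P + of_real t * H = (1 - (t + 1) / 2) *\<^sub>R (P - H) + ((t + 1) / 2) *\<^sub>R (P + H)"
    by (simp add: scaleR_conv_of_real field_simps)
  moreover have "0 \<le> (t + 1) / 2" "(t + 1) / 2 \<le> 1" using assms by auto
  ultimately show ?thesis unfolding in_segment by blast
qed

lemma centred_segment_param:
  fixes H P q :: complex
  assumes "q \<in> closed_segment (P - H) (P + H)"
  obtains t where "\<bar>t\<bar> \<le> 1" "q = P + of_real t * H"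
proof -
  obtain s where s: "0 \<le> s" "s \<le> 1" and q: "q = (1 - s) *\<^sub>R (P - H) + s *\<^sub>R (P + H)"
    using assms unfolding in_segment by blast
  have "q = P + of_real (2 * s - 1) * H" unfolding q by (simp add: scaleR_conv_of_real algebra_simps)
  moreover have "\<bar>2 * s - 1\<bar> \<le> 1" using s by auto
  ultimately show ?thesis using that by blast
qed

lemma closed_segment_line_mem:
  fixes p u :: complex
  assumes "\<alpha> \<le> 0" "0 \<le> \<beta>"
  shows "p \<in> closed_segment (p + of_real \<alpha> * u) (p + of_real \<beta> * u)"
proof (cases "\<beta> = \<alpha>")
  case True
  with assms show ?thesis by simp
next
  case False
  define l where "l = - \<alpha> / (\<beta> - \<alpha>)"
  have "0 \<le> l" "l \<le> 1" using assms False by (auto simp: l_def field_simps)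
  moreover have "(1 - l) *\<^sub>R (p + of_real \<alpha> * u) + l *\<^sub>R (p + of_real \<beta> * u)
      = p + of_real ((1 - l) * \<alpha> + l * \<beta>) * u"
    by (simp add: scaleR_conv_of_real algebra_simps)
  moreover have "(1 - l) * \<alpha> + l * \<beta> = 0" using assms False by (simp add: l_def field_simps)
  ultimately show ?thesis unfolding in_segment by (metis add_0_iff mult_zero_left of_real_0)
qed

text \<open>The quadrilateral spanned by two segments through P and Q contains every point of the strip
of half-width w/2 around the line PQ that lies between the lines of the two segments.  Here u is the
direction of PQ, b1, b2 are normals of the segments pointing into the quadrilateral, and the
half-segments H1, H2 reach the two boundary lines of the strip.\<close>

lemma convex_hull_segments_strip_mem:
  fixes P Q p H1 H2 b1 b2 :: complex and w :: real
  assumes u: "u = sgn (Q - P)" and QP: "Q \<noteq> P" and w: "w > 0"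
    and h1: "Im (cnj u * H1) = w / 2" and h2: "Im (cnj u * H2) = - w / 2"
    and f1: "Re (cnj b1 * H1) = 0" and f2: "Re (cnj b2 * H2) = 0"
    and g1: "Re (cnj b1 * u) > 0" and g2: "Re (cnj b2 * u) < 0"
    and po: "\<bar>Im (cnj u * (p - P))\<bar> \<le> w / 2"
    and p1: "Re (cnj b1 * (p - P)) \<ge> 0" and p2: "Re (cnj b2 * (p - Q)) \<ge> 0"
  shows "p \<in> convex hull (closed_segment (P - H1) (P + H1) \<union> closed_segment (Q - H2) (Q + H2))"
proof -
  let ?S = "convex hull (closed_segment (P - H1) (P + H1) \<union> closed_segment (Q - H2) (Q + H2))"
  define ofs where "ofs = Im (cnj u * (p - P))"
  define t where "t = 2 * ofs / w"
  have "\<bar>ofs\<bar> \<le> w / 2" using po by (simp add: ofs_def)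
  hence t: "\<bar>t\<bar> \<le> 1" "\<bar>-t\<bar> \<le> 1" using w by (auto simp: t_def field_simps abs_le_iff)
  define Y where "Y = P + of_real t * H1"
  define Z where "Z = Q + of_real (-t) * H2"
  have YS: "Y \<in> ?S" unfolding Y_def by (rule hull_inc) (use centred_segment_mem[OF t(1)] in blast)
  have ZS: "Z \<in> ?S" unfolding Z_def by (rule hull_inc) (use centred_segment_mem[OF t(2)] in blast)
  have un: "cmod u = 1" using u QP by (simp add: norm_sgn)
  have uQP: "Im (cnj u * (Q - P)) = 0" using u QP by (simp add: sgn_div_norm complex_eq_iff)
  txt \<open>Y and Z are the points of the two segments on the line through p parallel to PQ.\<close>
  define \<alpha> where "\<alpha> = Re (cnj u * (Y - p))"
  define \<beta> where "\<beta> = Re (cnj u * (Z - p))"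
  have "cnj u * (Y - p) = - (cnj u * (p - P)) + of_real t * (cnj u * H1)"
    by (simp add: Y_def algebra_simps)
  hence "Im (cnj u * (Y - p)) = - ofs + t * (w / 2)" using h1 by (simp add: ofs_def)
  hence "Im (cnj u * (Y - p)) = 0" using w by (simp add: t_def)
  hence Ya: "Y = p + of_real \<alpha> * u"
    unfolding \<alpha>_def using real_multiple_of_unit[OF un] by (metis add_diff_cancel_left' add_diff_eq)
  have "cnj u * (Z - p) = cnj u * (Q - P) - (cnj u * (p - P)) - of_real t * (cnj u * H2)"
    by (simp add: Z_def algebra_simps)
  hence "Im (cnj u * (Z - p)) = - ofs + t * (w / 2)" using h2 uQP by (simp add: ofs_def)
  hence "Im (cnj u * (Z - p)) = 0" using w by (simp add: t_def)
  hence Zb: "Z = p + of_real \<beta> * u"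
    unfolding \<beta>_def using real_multiple_of_unit[OF un] by (metis add_diff_cancel_left' add_diff_eq)
  have "cnj b1 * (Y - P) = of_real t * (cnj b1 * H1)" by (simp add: Y_def algebra_simps)
  moreover have "cnj b1 * (Y - P) = cnj b1 * (p - P) + of_real \<alpha> * (cnj b1 * u)"
    by (simp add: Ya algebra_simps)
  ultimately have "Re (cnj b1 * (p - P)) + \<alpha> * Re (cnj b1 * u) = 0"
    using f1 by (metis Re_of_real_mult mult_zero_right plus_complex.sel(1))
  hence a0: "\<alpha> \<le> 0" using g1 p1 by (smt (verit) mult_pos_pos)
  have "cnj b2 * (Z - Q) = of_real (-t) * (cnj b2 * H2)" by (simp add: Z_def algebra_simps)
  moreover have "cnj b2 * (Z - Q) = cnj b2 * (p - Q) + of_real \<beta> * (cnj b2 * u)"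
    by (simp add: Zb algebra_simps)
  ultimately have "Re (cnj b2 * (p - Q)) + \<beta> * Re (cnj b2 * u) = 0"
    using f2 by (metis Re_of_real_mult mult_zero_right plus_complex.sel(1))
  hence b0: "\<beta> \<ge> 0" using g2 p2 by (smt (verit) mult_neg_neg)
  show ?thesis
    using closed_segment_subset_convex_hull[OF YS ZS] closed_segment_line_mem[OF a0 b0, of p u]
    by (auto simp: Ya Zb)
qed

section \<open>The corner of a triangle\<close>

lemma nx_pv_numeral [simp]:
  "nx 0 = 1" "nx 1 = 2" "nx 2 = 0" "pv 0 = 2" "pv 1 = 0" "pv 2 = 1" "nx (Suc 0) = 2" "pv (Suc 0) = 0"
  by (simp_all add: nx_def pv_def)

lemma less_3_cases: "(k::nat) < 3 \<Longrightarrow> k = 0 \<or> k = 1 \<or> k = 2"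
  by auto

lemma pv_eq_iff_not_pv: "i < 3 \<Longrightarrow> j < 3 \<Longrightarrow> i \<noteq> j \<Longrightarrow> j = pv i \<longleftrightarrow> i \<noteq> pv j"
  by (elim less_3_cases[elim_format] disjE) simp_all

lemma nx_pv_inverse: "k < 3 \<Longrightarrow> nx k < 3 \<and> pv k < 3 \<and> pv (nx k) = k \<and> nx (pv k) = k"
  by (auto dest: less_3_cases)

definition in_edge :: "(nat \<Rightarrow> complex) \<Rightarrow> nat \<Rightarrow> complex" where
  "in_edge v k = v (pv k) - v k"

definition out_edge :: "(nat \<Rightarrow> complex) \<Rightarrow> nat \<Rightarrow> complex" where
  "out_edge v k = v (nx k) - v k"

definition fold_cos :: "(nat \<Rightarrow> complex) \<Rightarrow> nat \<Rightarrow> real" where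
  "fold_cos v k = Re (cnj (sgn (in_edge v k)) * sgn (out_edge v k))"

text \<open>For the bisector b, the vector \<i> w b / \<bar>b\<bar>^2 is perpendicular to b and has length
w / \<bar>b\<bar> = w / (2 cos (\<theta>/2)): it is half of the fold line (see fold_seg_eq).\<close>

definition fold_half :: "(nat \<Rightarrow> complex) \<Rightarrow> real \<Rightarrow> nat \<Rightarrow> complex" where
  "fold_half v w k = \<i> * of_real w * bisector v k / of_real ((cmod (bisector v k))\<^sup>2)"

lemma bisector_eq: "bisector v k = sgn (in_edge v k) + sgn (out_edge v k)"
  by (simp add: bisector_def in_edge_def out_edge_def)

lemma fold_cos_eq: "fold_cos v k = Re (cnj (in_edge v k) * out_edge v k) / (cmod (in_edge v k) * cmod (out_edge v k))"
  unfolding fold_cos_def sgn_div_norm by (simp add: divide_simps)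

lemma abs_fold_cos_le: "\<bar>fold_cos v k\<bar> \<le> 1"
proof -
  have "\<bar>fold_cos v k\<bar> \<le> cmod (sgn (in_edge v k)) * cmod (sgn (out_edge v k))"
    unfolding fold_cos_def by (rule abs_Re_cnj_mult_le)
  also have "\<dots> \<le> 1" by (simp add: norm_sgn mult_le_one)
  finally show ?thesis .
qed

lemma fold_angle_eq_arccos: "fold_angle v k = arccos (fold_cos v k)"
proof -
  have "(in_edge v k \<bullet> out_edge v k) / (cmod (in_edge v k) * cmod (out_edge v k)) = fold_cos v k"
    unfolding fold_cos_def inner_complex_def sgn_div_norm by (simp add: divide_simps)
  then show ?thesis unfolding fold_angle_def in_edge_def out_edge_def by simp
qed

lemma Im_cnj_mult_fold_half:
  "Im (cnj u * fold_half v w k) = w * Re (cnj (bisector v k) * u) / (cmod (bisector v k))\<^sup>2"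
  unfolding fold_half_def by (simp add: algebra_simps add_divide_distrib diff_divide_distrib)

lemma fold_half_orthogonal: "Re (cnj (bisector v k) * fold_half v w k) = 0"
  unfolding fold_half_def by (simp add: algebra_simps add_divide_distrib diff_divide_distrib)

lemma edge_offset_start: "edge_offset v k (v k) = 0"
  by (simp add: edge_offset_def)

lemma edge_offset_end: "edge_offset v k (v (nx k)) = 0"
  unfolding edge_offset_def sgn_eq by (simp add: algebra_simps)

lemma edge_offset_affine:
  "edge_offset v j (x + of_real t * (y - x)) = edge_offset v j x + t * (edge_offset v j y - edge_offset v j x)"
  unfolding edge_offset_def by (simp add: algebra_simps)

locale corner =
  fixes v :: "nat \<Rightarrow> complex" and k :: nat
  assumes nondegenerate: "Im (cnj (in_edge v k) * out_edge v k) \<noteq> 0"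
begin

lemma in_edge_nonzero: "in_edge v k \<noteq> 0"
  using nondegenerate by auto

lemma out_edge_nonzero: "out_edge v k \<noteq> 0"
  using nondegenerate by auto

lemma fold_cos_gt: "fold_cos v k > -1"
proof -
  let ?a = "in_edge v k" and ?b = "out_edge v k"
  have "(Re (cnj ?a * ?b))\<^sup>2 + (Im (cnj ?a * ?b))\<^sup>2 = (cmod ?a * cmod ?b)\<^sup>2"
    by (metis cmod_power2 complex_mod_cnj norm_mult)
  moreover have "(Im (cnj ?a * ?b))\<^sup>2 > 0" using nondegenerate by simp
  ultimately have "\<bar>Re (cnj ?a * ?b)\<bar>\<^sup>2 < (cmod ?a * cmod ?b)\<^sup>2" by (simp only: power2_abs)
  hence "- (cmod ?a * cmod ?b) < Re (cnj ?a * ?b)"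
    using power2_less_imp_less[of "\<bar>Re (cnj ?a * ?b)\<bar>"] by fastforce
  moreover have "cmod ?a * cmod ?b > 0" using in_edge_nonzero out_edge_nonzero by simp
  ultimately show ?thesis unfolding fold_cos_eq by (simp add: field_simps)
qed

lemma norm_bisector_power2: "(cmod (bisector v k))\<^sup>2 = 2 + 2 * fold_cos v k"
  using in_edge_nonzero out_edge_nonzero
  by (simp add: bisector_eq fold_cos_def cmod_add_power2 norm_sgn)

lemma bisector_nonzero: "bisector v k \<noteq> 0"
  using norm_bisector_power2 fold_cos_gt by auto

lemma two_cos_half_fold_angle: "2 * cos (fold_angle v k / 2) = cmod (bisector v k)"
proof -
  define t where "t = fold_angle v k"
  have ct: "cos t = fold_cos v k" and t0: "0 \<le> t" "t \<le> pi"
    using abs_fold_cos_le[of v k]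
    by (auto simp: t_def fold_angle_eq_arccos arccos_lbound arccos_ubound)
  have c0: "0 \<le> cos (t / 2)" by (rule cos_ge_zero) (use t0 in auto)
  have "(2 * cos (t / 2))\<^sup>2 = (cmod (bisector v k))\<^sup>2"
    using cos_double_cos[of "t / 2"] norm_bisector_power2 ct by (simp add: power_mult_distrib)
  thus ?thesis using c0 unfolding t_def[symmetric]
    by (metis norm_ge_zero power2_eq_imp_eq mult_nonneg_nonneg zero_le_numeral)
qed

lemma fold_seg_eq: "fold_seg v w k = closed_segment (v k - fold_half v w k) (v k + fold_half v w k)"
proof -
  have "of_real (w / (2 * cos (fold_angle v k / 2))) * (\<i> * sgn (bisector v k)) = fold_half v w k"
    unfolding two_cos_half_fold_angle fold_half_def sgn_div_norm
    by (simp add: power2_eq_square field_simps scaleR_conv_of_real)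
  thus ?thesis unfolding fold_seg_def Let_def by simp
qed

lemma vertex_mem_fold_seg: "v k \<in> fold_seg v w k"
  using centred_segment_mem[of 0 "v k" "fold_half v w k"] by (simp add: fold_seg_eq)

lemma fold_seg_bisector_orthogonal:
  assumes "q \<in> fold_seg v w k"
  shows "Re (cnj (bisector v k) * (q - v k)) = 0"
proof -
  obtain t where "q = v k + of_real t * fold_half v w k"
    using assms centred_segment_param unfolding fold_seg_eq by metis
  thus ?thesis using fold_half_orthogonal[of v k w]
    by (simp only: add_diff_cancel_left' mult.left_commute[of "cnj _"] Re_of_real_mult)
qed

lemma fold_seg_abs_Re_le:
  assumes "q \<in> fold_seg v w k"
  shows "\<bar>Re (cnj u * (q - v k))\<bar> \<le> cmod u * cmod (fold_half v w k)"
proof -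
  obtain t where t: "\<bar>t\<bar> \<le> 1" and q: "q = v k + of_real t * fold_half v w k"
    using assms centred_segment_param unfolding fold_seg_eq by metis
  have "\<bar>Re (cnj u * (q - v k))\<bar> = \<bar>t\<bar> * \<bar>Re (cnj u * fold_half v w k)\<bar>"
    unfolding q by (simp only: add_diff_cancel_left' mult.left_commute[of "cnj _"] Re_of_real_mult abs_mult)
  also have "\<dots> \<le> 1 * (cmod u * cmod (fold_half v w k))"
    using t abs_Re_cnj_mult_le by (intro mult_mono) auto
  finally show ?thesis by simp
qed

lemma Re_bisector_sgn_out_edge: "Re (cnj (bisector v k) * sgn (out_edge v k)) = 1 + fold_cos v k"
  unfolding bisector_eq fold_cos_def
  by (rule Re_cnj_add_mult_right_unit) (simp add: norm_sgn out_edge_nonzero)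

lemma Re_bisector_sgn_in_edge: "Re (cnj (bisector v k) * sgn (in_edge v k)) = 1 + fold_cos v k"
  unfolding bisector_eq fold_cos_def
  by (rule Re_cnj_add_mult_left_unit) (simp add: norm_sgn in_edge_nonzero)

text \<open>The endpoints of the fold line lie on the two boundary lines of the ribbon, at distance w/2
from both edges.\<close>

lemma fold_half_offset_out_edge: "Im (cnj (sgn (out_edge v k)) * fold_half v w k) = w / 2"
proof -
  have "w * (1 + fold_cos v k) / (2 + 2 * fold_cos v k) = w / 2" using fold_cos_gt by (simp add: field_simps)
  thus ?thesis by (simp only: Im_cnj_mult_fold_half norm_bisector_power2 Re_bisector_sgn_out_edge)
qed

lemma fold_half_offset_in_edge: "Im (cnj (sgn (in_edge v k)) * fold_half v w k) = w / 2"
proof -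
  have "w * (1 + fold_cos v k) / (2 + 2 * fold_cos v k) = w / 2" using fold_cos_gt by (simp add: field_simps)
  thus ?thesis by (simp only: Im_cnj_mult_fold_half norm_bisector_power2 Re_bisector_sgn_in_edge)
qed

lemma Re_bisector_in_edge_nonneg: "Re (cnj (bisector v k) * in_edge v k) \<ge> 0"
proof -
  have "in_edge v k = of_real (cmod (in_edge v k)) * sgn (in_edge v k)"
    using in_edge_nonzero by (simp add: sgn_eq)
  hence "Re (cnj (bisector v k) * in_edge v k) = cmod (in_edge v k) * (1 + fold_cos v k)"
    by (metis Re_of_real_mult Re_bisector_sgn_in_edge mult.left_commute)
  thus ?thesis using fold_cos_gt by simp
qed

lemma Re_bisector_out_edge_nonneg: "Re (cnj (bisector v k) * out_edge v k) \<ge> 0"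
proof -
  have "out_edge v k = of_real (cmod (out_edge v k)) * sgn (out_edge v k)"
    using out_edge_nonzero by (simp add: sgn_eq)
  hence "Re (cnj (bisector v k) * out_edge v k) = cmod (out_edge v k) * (1 + fold_cos v k)"
    by (metis Re_of_real_mult Re_bisector_sgn_out_edge mult.left_commute)
  thus ?thesis using fold_cos_gt by simp
qed

end

section \<open>Triangles and their incenter\<close>

definition twice_signed_area :: "(nat \<Rightarrow> complex) \<Rightarrow> real" where
  "twice_signed_area v = Im (cnj (v 1 - v 0) * (v 2 - v 0))"

definition side_length :: "(nat \<Rightarrow> complex) \<Rightarrow> nat \<Rightarrow> real" where
  "side_length v k = cmod (v (nx k) - v k)"

definition perimeter :: "(nat \<Rightarrow> complex) \<Rightarrow> real" where
  "perimeter v = side_length v 0 + side_length v 1 + side_length v 2"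

definition incenter :: "(nat \<Rightarrow> complex) \<Rightarrow> complex" where
  "incenter v = (of_real (side_length v 1) * v 0 + of_real (side_length v 2) * v 1
                 + of_real (side_length v 0) * v 2) / of_real (perimeter v)"

definition inradius :: "(nat \<Rightarrow> complex) \<Rightarrow> real" where
  "inradius v = \<bar>twice_signed_area v\<bar> / perimeter v"

lemma Im_cnj_in_edge_out_edge: "k < 3 \<Longrightarrow> Im (cnj (in_edge v k) * out_edge v k) = - twice_signed_area v"
  by (auto dest!: less_3_cases simp: in_edge_def out_edge_def twice_signed_area_def algebra_simps)

lemma twice_signed_area_nonzero:
  assumes "\<not> collinear {v 0, v 1, v 2}"
  shows "twice_signed_area v \<noteq> 0"
proof
  assume D: "twice_signed_area v = 0"
  have "collinear {v 1, v 2, v 0}"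
  proof (cases "v 1 = v 0")
    case True
    thus ?thesis unfolding collinear_3_expand by simp
  next
    case False
    define x where "x = v 1 - v 0"
    have x0: "x \<noteq> 0" using False by (simp add: x_def)
    have "Im (cnj (sgn x) * (v 2 - v 0)) = 0"
      using D x0 by (simp add: twice_signed_area_def x_def sgn_div_norm)
    from real_multiple_of_unit[OF _ this] x0
    obtain m where m: "v 2 - v 0 = of_real m * sgn x" by (metis norm_sgn)
    have "v 2 = (m / cmod x) *\<^sub>R v 1 + (1 - m / cmod x) *\<^sub>R v 0"
      using m x0 by (simp add: sgn_div_norm scaleR_conv_of_real x_def field_simps)
    thus ?thesis unfolding collinear_3_expand by blast
  qed
  moreover have "{v 0, v 1, v 2} = {v 1, v 2, v 0}" by auto
  ultimately show False using assms by simp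
qed

locale triangle =
  fixes v :: "nat \<Rightarrow> complex"
  assumes noncollinear: "\<not> collinear {v 0, v 1, v 2}"
begin

lemma corner: "k < 3 \<Longrightarrow> corner v k"
  unfolding corner_def using Im_cnj_in_edge_out_edge twice_signed_area_nonzero[OF noncollinear]
  by (metis neg_equal_0_iff_equal)

lemma side_length_pos: "k < 3 \<Longrightarrow> side_length v k > 0"
  using corner.out_edge_nonzero[OF corner] by (simp add: side_length_def out_edge_def)

lemma perimeter_pos: "perimeter v > 0"
  using side_length_pos[of 0] side_length_pos[of 1] side_length_pos[of 2] by (simp add: perimeter_def)

lemma perimeter_mult_incenter_sub:
  assumes k: "k < 3"
  shows "of_real (perimeter v) * (incenter v - v k) =
         of_real (cmod (out_edge v k)) * in_edge v k + of_real (cmod (in_edge v k)) * out_edge v k"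
proof -
  have "of_real (perimeter v) * incenter v = of_real (side_length v 1) * v 0
          + of_real (side_length v 2) * v 1 + of_real (side_length v 0) * v 2"
    using perimeter_pos unfolding incenter_def by simp
  moreover have n: "cmod (in_edge v 0) = side_length v 2" "cmod (out_edge v 0) = side_length v 0"
      "cmod (in_edge v 1) = side_length v 0" "cmod (out_edge v 1) = side_length v 1"
      "cmod (in_edge v 2) = side_length v 1" "cmod (out_edge v 2) = side_length v 2"
    by (simp_all add: in_edge_def out_edge_def side_length_def norm_minus_commute)
  ultimately show ?thesis unfolding right_diff_distrib perimeter_def
    using less_3_cases[OF k]
    by (elim disjE) (simp_all only: n, simp_all add: algebra_simps in_edge_def out_edge_def)
qed

lemma incenter_on_bisector:
  assumes k: "k < 3"
  shows "incenter v - v k =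
         of_real (cmod (in_edge v k) * cmod (out_edge v k) / perimeter v) * bisector v k"
proof -
  interpret corner v k by (rule corner[OF k])
  have "incenter v - v k = (of_real (cmod (out_edge v k)) * in_edge v k
          + of_real (cmod (in_edge v k)) * out_edge v k) / of_real (perimeter v)"
    using perimeter_mult_incenter_sub[OF k] perimeter_pos by (simp add: field_simps)
  also have "\<dots> = of_real (cmod (in_edge v k) * cmod (out_edge v k) / perimeter v) * bisector v k"
    unfolding bisector_eq sgn_eq using in_edge_nonzero out_edge_nonzero perimeter_pos
    by (simp add: field_simps)
  finally show ?thesis .
qed

lemma Re_bisector_incenter_pos: "k < 3 \<Longrightarrow> Re (cnj (bisector v k) * (incenter v - v k)) > 0"
proof -
  assume k: "k < 3"
  interpret corner v k by (rule corner[OF k])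
  define c where "c = cmod (in_edge v k) * cmod (out_edge v k) / perimeter v"
  have "c > 0" using in_edge_nonzero out_edge_nonzero perimeter_pos by (simp add: c_def)
  moreover have "Re (cnj (bisector v k) * (incenter v - v k)) = c * (cmod (bisector v k))\<^sup>2"
    unfolding incenter_on_bisector[OF k] c_def[symmetric] cmod_power2
    by (simp add: algebra_simps power2_eq_square)
  ultimately show ?thesis using bisector_nonzero by simp
qed

lemma edge_offset_incenter:
  assumes k: "k < 3"
  shows "edge_offset v k (incenter v) = twice_signed_area v / perimeter v"
proof -
  interpret corner v k by (rule corner[OF k])
  let ?A = "in_edge v k" and ?B = "out_edge v k"
  have "incenter v - v k = (of_real (cmod ?B) * ?A + of_real (cmod ?A) * ?B) / of_real (perimeter v)"
    using perimeter_mult_incenter_sub[OF k] perimeter_pos by (simp add: field_simps)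
  hence "edge_offset v k (incenter v)
      = Im (cnj ?B * (of_real (cmod ?B) * ?A + of_real (cmod ?A) * ?B)) / (cmod ?B * perimeter v)"
    unfolding edge_offset_def out_edge_def[symmetric] sgn_eq by (simp add: Im_divide_of_real)
  also have "\<dots> = cmod ?B * Im (cnj ?B * ?A) / (cmod ?B * perimeter v)"
    unfolding Im_cnj_mult_lin by (simp add: algebra_simps)
  also have "Im (cnj ?B * ?A) = - Im (cnj ?A * ?B)" by (simp add: algebra_simps)
  also have "\<dots> = twice_signed_area v" by (simp only: Im_cnj_in_edge_out_edge[OF k] minus_minus)
  finally show ?thesis using out_edge_nonzero by simp
qed

lemma piece_memI:
  assumes j: "j < 3" and w: "w > 0"
    and offset: "\<bar>edge_offset v j p\<bar> < w / 2"
    and side1: "Re (cnj (bisector v j) * (p - v j)) \<ge> 0"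
    and side2: "Re (cnj (bisector v (nx j)) * (p - v (nx j))) \<ge> 0"
  shows "p \<in> piece v w j"
proof -
  have j': "nx j < 3" "pv (nx j) = j" using nx_pv_inverse[OF j] by auto
  interpret c1: corner v j by (rule corner[OF j])
  interpret c2: corner v "nx j" by (rule corner[OF j'(1)])
  define u where "u = sgn (v (nx j) - v j)"
  have uB: "u = sgn (out_edge v j)" by (simp add: u_def out_edge_def)
  have "in_edge v (nx j) = - out_edge v j" using j'(2) by (simp add: in_edge_def out_edge_def)
  hence uA: "u = - sgn (in_edge v (nx j))" by (simp add: uB sgn_minus)
  have "v (nx j) \<noteq> v j" using c1.out_edge_nonzero by (simp add: out_edge_def)
  moreover have "Im (cnj u * fold_half v w j) = w / 2" unfolding uB by (rule c1.fold_half_offset_out_edge)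
  moreover have "Im (cnj u * fold_half v w (nx j)) = - w / 2"
    using c2.fold_half_offset_in_edge[of w] unfolding uA by simp
  moreover have "Re (cnj (bisector v j) * u) > 0"
    unfolding uB c1.Re_bisector_sgn_out_edge using c1.fold_cos_gt by simp
  moreover have "Re (cnj (bisector v (nx j)) * u) < 0"
    using c2.Re_bisector_sgn_in_edge c2.fold_cos_gt unfolding uA by simp
  moreover have "\<bar>Im (cnj u * (p - v j))\<bar> \<le> w / 2" using offset by (simp add: edge_offset_def u_def)
  ultimately have "p \<in> convex hull (closed_segment (v j - fold_half v w j) (v j + fold_half v w j) \<union>
      closed_segment (v (nx j) - fold_half v w (nx j)) (v (nx j) + fold_half v w (nx j)))"
    using convex_hull_segments_strip_mem[OF u_def _ w _ _ fold_half_orthogonal fold_half_orthogonal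
        _ _ _ side1 side2] by blast
  thus ?thesis using offset unfolding piece_def c1.fold_seg_eq c2.fold_seg_eq by simp
qed

end

section \<open>The incenter under a wide ribbon\<close>

lemma crossing_infoD:
  assumes "crossing_info v w C"
  shows crossing_info_sign: "\<And>i j p. pdom v w i j p \<Longrightarrow> C i j p = 1 \<or> C i j p = -1"
    and crossing_info_antisym: "\<And>i j p. pdom v w i j p \<Longrightarrow> C j i p = - C i j p"
    and crossing_info_continuous:
      "\<And>i j. i < 3 \<Longrightarrow> j < 3 \<Longrightarrow> i \<noteq> j \<Longrightarrow> continuous_on {p. pdom v w i j p} (C i j)"
    and crossing_info_trans: "\<And>i j k p. pdom v w i j p \<Longrightarrow> pdom v w j k p \<Longrightarrow> pdom v w i k p \<Longrightarrow>
         C i j p = 1 \<Longrightarrow> C j k p = 1 \<Longrightarrow> C i k p = 1"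
  using assms unfolding crossing_info_def by (elim conjE; blast)+

lemma shared_pv: "k < 3 \<Longrightarrow> shared k (pv k) = k \<and> pv k \<noteq> k"
  by (auto dest!: less_3_cases simp: shared_def)

locale wide_ribbon = triangle +
  fixes w :: real
  assumes width_pos: "w > 0"
    and inradius_less: "inradius v < w / 2"
begin

lemma corner_segment_mem_pieces:
  assumes k: "k < 3" and t: "0 < t" "t \<le> 1"
  defines "p \<equiv> v k + of_real t * (incenter v - v k)"
  shows "p \<in> piece v w k \<and> p \<in> piece v w (pv k) \<and> p \<notin> fold_seg v w k"
proof -
  have kk: "nx k < 3" "pv k < 3" "pv (nx k) = k" "nx (pv k) = k" using nx_pv_inverse[OF k] by auto
  interpret c: corner v k by (rule corner[OF k])
  interpret cn: corner v "nx k" by (rule corner[OF kk(1)])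
  interpret cp: corner v "pv k" by (rule corner[OF kk(2)])
  have offset_k: "edge_offset v k p = t * (twice_signed_area v / perimeter v)"
    unfolding p_def edge_offset_affine edge_offset_start edge_offset_incenter[OF k] by simp
  have offset_pv: "edge_offset v (pv k) p = t * (twice_signed_area v / perimeter v)"
    unfolding p_def edge_offset_affine edge_offset_incenter[OF kk(2)]
    using edge_offset_end[of v "pv k"] kk(4) by simp
  have "\<bar>t * (twice_signed_area v / perimeter v)\<bar> = t * inradius v"
    using t perimeter_pos by (simp add: inradius_def abs_mult)
  also have "\<dots> \<le> inradius v"
    using t perimeter_pos by (intro mult_left_le_one_le) (auto simp: inradius_def)
  finally have "\<bar>t * (twice_signed_area v / perimeter v)\<bar> \<le> inradius v" .
  hence offset: "\<bar>t * (twice_signed_area v / perimeter v)\<bar> < w / 2"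
    using inradius_less by linarith
  have "Re (cnj (bisector v k) * (p - v k)) = t * Re (cnj (bisector v k) * (incenter v - v k))"
    unfolding p_def by (simp only: add_diff_cancel_left' mult.left_commute[of "cnj _"] Re_of_real_mult)
  hence side_k: "Re (cnj (bisector v k) * (p - v k)) > 0"
    using Re_bisector_incenter_pos[OF k] t by simp
  have "p - v (nx k) = of_real (1 - t) * in_edge v (nx k) + of_real t * (incenter v - v (nx k))"
    using kk(3) by (simp add: p_def in_edge_def algebra_simps)
  hence "Re (cnj (bisector v (nx k)) * (p - v (nx k))) = (1 - t) * Re (cnj (bisector v (nx k)) * in_edge v (nx k))
      + t * Re (cnj (bisector v (nx k)) * (incenter v - v (nx k)))"
    by (simp only: Re_cnj_mult_lin)
  hence side_nx: "Re (cnj (bisector v (nx k)) * (p - v (nx k))) \<ge> 0"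
    using cn.Re_bisector_in_edge_nonneg Re_bisector_incenter_pos[OF kk(1)] t by simp
  have "p - v (pv k) = of_real (1 - t) * out_edge v (pv k) + of_real t * (incenter v - v (pv k))"
    using kk(4) by (simp add: p_def out_edge_def algebra_simps)
  hence "Re (cnj (bisector v (pv k)) * (p - v (pv k))) = (1 - t) * Re (cnj (bisector v (pv k)) * out_edge v (pv k))
      + t * Re (cnj (bisector v (pv k)) * (incenter v - v (pv k)))"
    by (simp only: Re_cnj_mult_lin)
  hence side_pv: "Re (cnj (bisector v (pv k)) * (p - v (pv k))) \<ge> 0"
    using cp.Re_bisector_out_edge_nonneg Re_bisector_incenter_pos[OF kk(2)] t by simp
  have "p \<in> piece v w k"
    using piece_memI[OF k width_pos] offset_k offset side_k side_nx by simp
  moreover have "p \<in> piece v w (pv k)"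
    using piece_memI[OF kk(2) width_pos] offset_pv offset side_k side_pv kk(4) by simp
  moreover have "p \<notin> fold_seg v w k" using c.fold_seg_bisector_orthogonal side_k by fastforce
  ultimately show ?thesis by blast
qed

lemma corner_segment_pdom:
  assumes k: "k < 3" and t: "0 < t" "t \<le> 1"
  shows "pdom v w k (pv k) (v k + of_real t * (incenter v - v k))"
  using corner_segment_mem_pieces[OF k t] shared_pv[OF k] nx_pv_inverse[OF k] k
  unfolding pdom_def by auto

lemma incenter_pdom:
  assumes "i < 3" "j < 3" "i \<noteq> j"
  shows "pdom v w i j (incenter v)"
proof -
  have "incenter v \<in> piece v w k" if "k < 3" for k
    using corner_segment_mem_pieces[OF that, of 1] by simp
  moreover have "incenter v \<notin> fold_seg v w k" if "k < 3" for k
    using corner.fold_seg_bisector_orthogonal[OF corner[OF that]] Re_bisector_incenter_pos[OF that]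
    by fastforce
  moreover have "shared i j < 3" using assms nx_pv_inverse unfolding shared_def by auto
  ultimately show ?thesis using assms unfolding pdom_def by auto
qed

lemma crossing_constant_on_corner_segment:
  assumes C: "crossing_info v w C" and k: "k < 3"
  obtains c where "\<And>t. t \<in> {0<..1} \<Longrightarrow> C k (pv k) (v k + of_real t * (incenter v - v k)) = c"
proof -
  define S where "S = (\<lambda>t. v k + of_real t * (incenter v - v k)) ` {0<..(1::real)}"
  have sub: "S \<subseteq> {p. pdom v w k (pv k) p}"
    unfolding S_def using corner_segment_pdom[OF k] by auto
  have "connected S" unfolding S_def
    by (rule connected_continuous_image) (auto intro!: continuous_intros)
  moreover have "continuous_on S (C k (pv k))"
    using continuous_on_subset[OF crossing_info_continuous[OF C k] sub] shared_pv[OF k] nx_pv_inverse[OF k]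
    by simp
  moreover have "finite (C k (pv k) ` S)"
    by (rule finite_subset[of _ "{1, -1}"]) (use sub crossing_info_sign[OF C] in auto)
  ultimately have "C k (pv k) constant_on S"
    using continuous_finite_range_constant_eq by blast
  thus ?thesis using that unfolding constant_on_def S_def by auto
qed

lemma crossing_at_incenter:
  assumes C: "crossing_info v w C" and F: "agrees_with_folds v w F C" and k: "k < 3"
  shows "C k (pv k) (incenter v) = (if F k then 1 else -1)"
proof -
  obtain c where c: "\<And>t. t \<in> {0<..1} \<Longrightarrow> C k (pv k) (v k + of_real t * (incenter v - v k)) = c"
    using crossing_constant_on_corner_segment[OF C k] by blast
  obtain e where e: "e > 0" and near: "\<And>p. pdom v w k (pv k) p \<Longrightarrow> infdist p (fold_seg v w k) < e \<Longrightarrow>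
      C k (pv k) p = (if F k then 1 else -1)"
    using F k unfolding agrees_with_folds_def by blast
  define d where "d = cmod (incenter v - v k) + 1"
  have d: "d > 0" by (simp add: d_def add_nonneg_pos)
  define t where "t = min 1 (e / (2 * d))"
  have t: "0 < t" "t \<le> 1" using e d by (auto simp: t_def)
  define p where "p = v k + of_real t * (incenter v - v k)"
  have "infdist p (fold_seg v w k) \<le> dist p (v k)"
    by (rule infdist_le) (rule corner.vertex_mem_fold_seg[OF corner[OF k]])
  also have "dist p (v k) = t * cmod (incenter v - v k)"
    using t by (simp add: p_def dist_norm norm_mult)
  also have "\<dots> \<le> e / (2 * d) * cmod (incenter v - v k)"
    by (rule mult_right_mono) (auto simp: t_def)
  also have "\<dots> < e / (2 * d) * (2 * d)"
    using e d by (intro mult_strict_left_mono) (auto simp: d_def)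
  finally have "infdist p (fold_seg v w k) < e" using d by simp
  hence "C k (pv k) p = (if F k then 1 else -1)"
    using near corner_segment_pdom[OF k t] unfolding p_def by blast
  moreover have "C k (pv k) p = c" unfolding p_def using c t by simp
  moreover have "C k (pv k) (incenter v) = c" using c[of 1] by simp
  ultimately show ?thesis by simp
qed

lemma not_same_type_crossing_info:
  assumes F: "same_type F" and C: "crossing_info v w C" "agrees_with_folds v w F C"
  shows False
proof -
  define I where "I = incenter v"
  define s where "s = (if F 0 then 1 else -1 :: real)"
  have "F 1 = F 0" "F 2 = F 0" using F unfolding same_type_def by auto
  hence c: "C 0 2 I = s" "C 1 0 I = s" "C 2 1 I = s"
    using crossing_at_incenter[OF C, of 0] crossing_at_incenter[OF C, of 1]
      crossing_at_incenter[OF C, of 2]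
    by (simp_all add: s_def I_def)
  have pd: "pdom v w i j I" if "i < 3" "j < 3" "i \<noteq> j" for i j
    unfolding I_def by (rule incenter_pdom[OF that])
  have anti: "C j i I = - C i j I" if "i < 3" "j < 3" "i \<noteq> j" for i j
    using crossing_info_antisym[OF C(1) pd[OF that]] .
  have trans: "C i k I = 1" if "C i j I = 1" "C j k I = 1"
    "i < 3" "j < 3" "k < 3" "i \<noteq> j" "j \<noteq> k" "i \<noteq> k" for i j k
    using crossing_info_trans[OF C(1) pd pd pd] that by blast
  show False
  proof (cases "F 0")
    case True
    hence "C 1 2 I = 1" using trans[of 1 0 2] c by (simp add: s_def)
    thus False using anti[of 1 2] c True by (simp add: s_def)
  next
    case False
    hence "C 0 1 I = 1" "C 1 2 I = 1" using anti[of 1 0] anti[of 2 1] c by (simp_all add: s_def)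
    thus False using trans[of 0 1 2] c False by (simp add: s_def)
  qed
qed

end

section \<open>The isoperimetric inequality for triangles\<close>

lemma arith_geo_mean3:
  fixes x y z :: real
  assumes "x \<ge> 0" "y \<ge> 0" "z \<ge> 0"
  shows "27 * (x * y * z) \<le> (x + y + z) ^ 3"
proof -
  have "2 * ((x + y + z) ^ 3 - 27 * (x * y * z)) =
     (x + y + z) * ((x - y)\<^sup>2 + (y - z)\<^sup>2 + (z - x)\<^sup>2) + 6 * (x * (y - z)\<^sup>2 + y * (z - x)\<^sup>2 + z * (x - y)\<^sup>2)"
    by (simp add: power2_eq_square power3_eq_cube algebra_simps)
  moreover have "(x + y + z) * ((x - y)\<^sup>2 + (y - z)\<^sup>2 + (z - x)\<^sup>2) \<ge> 0"
    "x * (y - z)\<^sup>2 + y * (z - x)\<^sup>2 + z * (x - y)\<^sup>2 \<ge> 0" using assms by simp_all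
  ultimately have "2 * ((x + y + z) ^ 3 - 27 * (x * y * z)) \<ge> 0" by simp
  thus ?thesis by simp
qed

text \<open>Heron's formula 16 A^2 = L (L - 2a) (L - 2b) (L - 2c), followed by AM-GM on the last
three factors.\<close>

lemma triangle_isoperimetric:
  fixes a b :: complex
  shows "108 * (Im (cnj a * b))\<^sup>2 \<le> (cmod a + cmod (b - a) + cmod b) ^ 4"
proof -
  define p q r where "p = cmod a" and "q = cmod (b - a)" and "r = cmod b"
  define R D where "R = Re (cnj a * b)" and "D = Im (cnj a * b)"
  have lagrange: "R\<^sup>2 + D\<^sup>2 = p\<^sup>2 * r\<^sup>2"
    unfolding R_def D_def p_def r_def cmod_power2 by (simp add: power2_eq_square algebra_simps)
  have cosine_law: "q\<^sup>2 = p\<^sup>2 + r\<^sup>2 - 2 * R"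
    unfolding R_def q_def p_def r_def cmod_power2 by (simp add: power2_eq_square algebra_simps)
  have "p\<^sup>2 + r\<^sup>2 - q\<^sup>2 = 2 * R" using cosine_law by simp
  hence "4 * D\<^sup>2 = 4 * p\<^sup>2 * r\<^sup>2 - (p\<^sup>2 + r\<^sup>2 - q\<^sup>2)\<^sup>2"
    using lagrange by (simp add: power2_eq_square algebra_simps)
  also have "\<dots> = (p + q + r) * ((- p + q + r) * (p - q + r) * (p + q - r))"
    by (simp add: power2_eq_square algebra_simps)
  also have "\<dots> \<le> (p + q + r) * ((p + q + r) ^ 3 / 27)"
  proof (rule mult_left_mono)
    have "q \<le> p + r" "p \<le> q + r" "r \<le> p + q" unfolding p_def q_def r_def
      using norm_triangle_ineq4[of b a] norm_triangle_ineq4[of b "b - a"] norm_triangle_ineq[of a "b - a"]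
      by simp_all
    hence "27 * ((- p + q + r) * (p - q + r) * (p + q - r)) \<le> (p + q + r) ^ 3"
      using arith_geo_mean3[of "- p + q + r" "p - q + r" "p + q - r"] by (simp add: add.commute)
    thus "(- p + q + r) * (p - q + r) * (p + q - r) \<le> (p + q + r) ^ 3 / 27" by linarith
    show "0 \<le> p + q + r" by (simp add: p_def q_def r_def)
  qed
  finally have "108 * D\<^sup>2 \<le> (p + q + r) ^ 4" by (simp add: power_def field_simps numeral_eq_Suc)
  thus ?thesis by (simp add: D_def p_def q_def r_def add.assoc add.commute add.left_commute)
qed

lemma ribbonlength_eq_perimeter: "ribbonlength v w = perimeter v / w"
  unfolding ribbonlength_def perimeter_def side_length_def dist_norm by (simp add: norm_minus_commute)

lemma (in triangle) inradius_less_of_ribbonlength_less: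
  assumes w: "w > 0" and rl: "ribbonlength v w < 3 * sqrt 3"
  shows "inradius v < w / 2"
proof -
  let ?L = "perimeter v" and ?D = "twice_signed_area v"
  have "108 * ?D\<^sup>2 \<le> ?L ^ 4"
    using triangle_isoperimetric[of "v 1 - v 0" "v 2 - v 0"]
    unfolding twice_signed_area_def perimeter_def side_length_def by (simp add: norm_minus_commute)
  also have "\<dots> = ?L\<^sup>2 * ?L\<^sup>2" by (simp flip: power_add)
  also have "\<dots> < ?L\<^sup>2 * (27 * w\<^sup>2)"
  proof (rule mult_strict_left_mono)
    have "?L < 3 * sqrt 3 * w" using rl w unfolding ribbonlength_eq_perimeter by (simp add: divide_less_eq)
    hence "?L\<^sup>2 < (3 * sqrt 3 * w)\<^sup>2" by (rule power_strict_mono) (use perimeter_pos in auto)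
    thus "?L\<^sup>2 < 27 * w\<^sup>2" by (simp add: power_mult_distrib)
  qed (use perimeter_pos in simp)
  finally have "(2 * \<bar>?D\<bar>)\<^sup>2 < (w * ?L)\<^sup>2" by (simp add: power_mult_distrib power2_abs)
  hence "2 * \<bar>?D\<bar> < w * ?L" by (rule power2_less_imp_less) (use w perimeter_pos in auto)
  thus ?thesis using perimeter_pos by (simp add: inradius_def divide_less_eq)
qed

theorem ribbonlength_ge_of_same_type:
  assumes "\<not> collinear {v 0, v 1, v 2}" "w > 0" "same_type F" "allowed v w F"
  shows "3 * sqrt 3 \<le> ribbonlength v w"
proof (rule ccontr)
  interpret triangle v by unfold_locales (rule assms(1))
  assume "\<not> ?thesis"
  then interpret wide_ribbon v w
    using assms(2) inradius_less_of_ribbonlength_less by unfold_locales auto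
  show False using not_same_type_crossing_info assms(3,4) unfolding allowed_def by blast
qed

section \<open>The equilateral triangle\<close>

locale equilateral_triangle = triangle +
  assumes equilateral: "equilateral v"
begin

definition side :: real where
  "side = side_length v 0"

definition critical_width :: real where
  "critical_width = side / sqrt 3"

lemma side_length_eq: "k < 3 \<Longrightarrow> side_length v k = side"
  using equilateral
  by (auto dest!: less_3_cases simp: equilateral_def side_def side_length_def dist_norm norm_minus_commute)

lemma side_pos: "side > 0"
  using side_length_pos[of 0] by (simp add: side_def)

lemma critical_width_pos: "critical_width > 0"
  using side_pos by (simp add: critical_width_def)

lemma norm_edges:
  "k < 3 \<Longrightarrow> cmod (in_edge v k) = side \<and> cmod (out_edge v k) = side \<and> cmod (out_edge v k - in_edge v k) = side"
  using side_length_eq[of 0] side_length_eq[of 1] side_length_eq[of 2]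
  by (auto dest!: less_3_cases simp: side_length_def in_edge_def out_edge_def norm_minus_commute)

lemma Re_cnj_in_edge_out_edge: "k < 3 \<Longrightarrow> Re (cnj (in_edge v k) * out_edge v k) = side\<^sup>2 / 2"
proof -
  assume k: "k < 3"
  have "(cmod (out_edge v k - in_edge v k))\<^sup>2
      = (cmod (in_edge v k))\<^sup>2 + (cmod (out_edge v k))\<^sup>2 - 2 * Re (cnj (in_edge v k) * out_edge v k)"
    unfolding cmod_power2 by (simp add: power2_eq_square algebra_simps)
  thus ?thesis using norm_edges[OF k] by simp
qed

lemma fold_cos_eq_half: "k < 3 \<Longrightarrow> fold_cos v k = 1 / 2"
  using norm_edges Re_cnj_in_edge_out_edge side_pos by (simp add: fold_cos_eq power2_eq_square)

lemma twice_signed_area_power2: "(twice_signed_area v)\<^sup>2 = 3 * side ^ 4 / 4"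
proof -
  define R I where "R = Re (cnj (in_edge v 0) * out_edge v 0)" and "I = Im (cnj (in_edge v 0) * out_edge v 0)"
  have "R\<^sup>2 + I\<^sup>2 = (cmod (in_edge v 0) * cmod (out_edge v 0))\<^sup>2"
    unfolding R_def I_def by (metis cmod_power2 complex_mod_cnj norm_mult)
  moreover have "R = side\<^sup>2 / 2" "I = - twice_signed_area v"
    unfolding R_def I_def by (simp_all only: Re_cnj_in_edge_out_edge Im_cnj_in_edge_out_edge zero_less_numeral)
  ultimately have "(side\<^sup>2 / 2)\<^sup>2 + (twice_signed_area v)\<^sup>2 = (side * side)\<^sup>2"
    using norm_edges[of 0] by simp
  thus ?thesis by (simp add: power2_eq_square power4_eq_xxxx field_simps)
qed

lemma norm_fold_half: "k < 3 \<Longrightarrow> cmod (fold_half v critical_width k) = side / 3"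
proof -
  assume k: "k < 3"
  interpret corner v k by (rule corner[OF k])
  have b2: "(cmod (bisector v k))\<^sup>2 = 3" using norm_bisector_power2 fold_cos_eq_half[OF k] by simp
  hence "cmod (bisector v k) = sqrt 3" by (metis norm_ge_zero real_sqrt_unique)
  thus ?thesis using b2 critical_width_pos
    by (simp add: fold_half_def norm_mult norm_divide critical_width_def field_simps)
qed

text \<open>The fold lines at the two ends of an edge have length 2/3 of the edge, so their projections
onto the edge are disjoint.\<close>

lemma immersed_critical_width: "immersed_away_from_folds v critical_width"
  unfolding immersed_away_from_folds_def
proof (intro allI impI equals0I)
  fix i q assume i: "i < 3" and q: "q \<in> fold_seg v critical_width i \<inter> fold_seg v critical_width (nx i)"
  have ii: "nx i < 3" "pv (nx i) = i" using nx_pv_inverse[OF i] by auto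
  let ?B = "out_edge v i"
  have B: "cmod ?B = side" using norm_edges[OF i] by simp
  have "\<bar>Re (cnj ?B * (q - v i))\<bar> \<le> side * (side / 3)"
    using corner.fold_seg_abs_Re_le[OF corner[OF i], of q critical_width ?B] q B norm_fold_half[OF i]
    by simp
  moreover have "\<bar>Re (cnj ?B * (q - v (nx i)))\<bar> \<le> side * (side / 3)"
    using corner.fold_seg_abs_Re_le[OF corner[OF ii(1)], of q critical_width ?B] q B norm_fold_half[OF ii(1)]
    by simp
  moreover have "Re (cnj ?B * (q - v i)) = Re (cnj ?B * (q - v (nx i))) + (cmod ?B)\<^sup>2"
    unfolding cmod_power2 by (simp add: out_edge_def power2_eq_square algebra_simps)
  moreover have "side * (side / 3) = side\<^sup>2 / 3" by (simp add: power2_eq_square)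
  moreover have "side\<^sup>2 > 0" using side_pos by simp
  ultimately show False unfolding B abs_le_iff by linarith
qed

text \<open>The three edge offsets of any point add up to twice the area over the side, which equals
three times the inradius critical_width / 2.\<close>

lemma no_point_in_all_pieces:
  "\<not> (p \<in> piece v critical_width 0 \<and> p \<in> piece v critical_width 1 \<and> p \<in> piece v critical_width 2)"
proof
  let ?w = critical_width
  assume h: "p \<in> piece v ?w 0 \<and> p \<in> piece v ?w 1 \<and> p \<in> piece v ?w 2"
  have offset: "\<bar>edge_offset v k p\<bar> < ?w / 2" if "k < 3" for k
    using h less_3_cases[OF that] unfolding piece_def by auto
  have n: "cmod (v 1 - v 0) = side" "cmod (v 2 - v 1) = side" "cmod (v 0 - v 2) = side"
    using side_length_eq[of 0] side_length_eq[of 1] side_length_eq[of 2] by (auto simp: side_length_def)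
  have "edge_offset v 0 p + edge_offset v 1 p + edge_offset v 2 p =
      (Im (cnj (v 1 - v 0) * (p - v 0)) + Im (cnj (v 2 - v 1) * (p - v 1))
       + Im (cnj (v 0 - v 2) * (p - v 2))) / side"
    unfolding edge_offset_def nx_pv_numeral sgn_eq n by (simp add: add_divide_distrib Im_divide_of_real)
  also have "\<dots> = twice_signed_area v / side"
    unfolding twice_signed_area_def by (simp add: algebra_simps)
  finally have "\<bar>twice_signed_area v / side\<bar> < 3 * (?w / 2)"
    using offset[of 0] offset[of 1] offset[of 2] by linarith
  hence "(twice_signed_area v / side)\<^sup>2 < (3 * (?w / 2))\<^sup>2"
    by (metis abs_ge_zero power2_abs power_strict_mono zero_less_numeral)
  hence "(twice_signed_area v)\<^sup>2 / side\<^sup>2 < 9 * ?w\<^sup>2 / 4" by (simp add: power_divide power_mult_distrib)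
  moreover have "?w\<^sup>2 = side\<^sup>2 / 3" by (simp add: critical_width_def power_divide)
  ultimately show False
    unfolding twice_signed_area_power2 using side_pos by (simp add: field_simps power_def numeral_eq_Suc)
qed

lemma no_point_in_three_pieces:
  assumes "i < 3" "j < 3" "k < 3" "i \<noteq> j" "j \<noteq> k" "i \<noteq> k"
    and "p \<in> piece v critical_width i" "p \<in> piece v critical_width j" "p \<in> piece v critical_width k"
  shows False
proof -
  have "m = i \<or> m = j \<or> m = k" if "m < 3" for m
    using assms that by arith
  hence "p \<in> piece v critical_width m" if "m < 3" for m
    using assms that by auto
  hence "p \<in> piece v critical_width 0" "p \<in> piece v critical_width 1" "p \<in> piece v critical_width 2"
    by simp_all
  thus False using no_point_in_all_pieces by blast
qed

text \<open>Since no three ribbon points share an image, the constant crossing information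
"the piece of e_i lies over that of e_(i-1)", with the sign of the folds, is consistent.\<close>

lemma allowed_critical_width:
  assumes F: "same_type F"
  shows "allowed v critical_width F"
proof -
  let ?w = critical_width
  define s where "s = (if F 0 then 1 else -1 :: real)"
  define C where "C = (\<lambda>i j (p::complex). if j = pv i then s else - s)"
  have "crossing_info v ?w C"
    unfolding crossing_info_def
  proof (intro conjI allI impI)
    fix i j p
    show "C i j p = 1 \<or> C i j p = -1" by (simp add: C_def s_def)
  next
    fix i j
    show "continuous_on {p. pdom v ?w i j p} (C i j)" unfolding C_def by (rule continuous_on_const)
  next
    fix i j p assume "pdom v ?w i j p"
    hence "i < 3" "j < 3" "i \<noteq> j" unfolding pdom_def by auto
    hence "j = pv i \<longleftrightarrow> i \<noteq> pv j" by (rule pv_eq_iff_not_pv)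
    thus "C j i p = - C i j p" by (auto simp: C_def)
  next
    fix i i' j p assume "pdom v ?w i j p \<and> pdom v ?w i' j p \<and> i \<noteq> i' \<and> p \<in> fold_seg v ?w (shared i i')"
    thus "C i j p = C i' j p"
      using no_point_in_three_pieces[of i j i' p] unfolding pdom_def by blast
  next
    fix i j k p assume "pdom v ?w i j p \<and> pdom v ?w j k p \<and> pdom v ?w i k p \<and> C i j p = 1 \<and> C j k p = 1"
    thus "C i k p = 1" using no_point_in_three_pieces[of i j k p] unfolding pdom_def by blast
  qed
  moreover have "agrees_with_folds v ?w F C"
    unfolding agrees_with_folds_def
  proof (intro allI impI)
    fix i :: nat assume "i < 3"
    hence "F i = F 0" using F less_3_cases[of i] unfolding same_type_def by auto
    thus "\<exists>e>0. \<forall>p. pdom v ?w i (pv i) p \<and> infdist p (fold_seg v ?w i) < e \<longrightarrow>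
        C i (pv i) p = (if F i then 1 else -1)"
      by (intro exI[of _ 1]) (simp add: C_def s_def)
  qed
  ultimately show ?thesis unfolding allowed_def using immersed_critical_width by blast
qed

lemma ribbonlength_critical_width: "ribbonlength v critical_width = 3 * sqrt 3"
proof -
  have "perimeter v = 3 * side"
    using side_length_eq[of 0] side_length_eq[of 1] side_length_eq[of 2] by (simp add: perimeter_def)
  thus ?thesis using side_pos by (simp add: ribbonlength_eq_perimeter critical_width_def)
qed

end

theorem theorem5p6:
  shows "(\<forall>(v :: nat \<Rightarrow> complex) (w :: real) (F :: nat \<Rightarrow> bool).
            \<not> collinear {v 0, v 1, v 2} \<and> w > 0 \<and> same_type F \<and> allowed v w F
            \<longrightarrow> 3 * sqrt 3 \<le> ribbonlength v w) \<and>
         (\<forall>(v :: nat \<Rightarrow> complex) (F :: nat \<Rightarrow> bool).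
            \<not> collinear {v 0, v 1, v 2} \<and> equilateral v \<and> same_type F
            \<longrightarrow> (\<exists>w>0. allowed v w F \<and> ribbonlength v w = 3 * sqrt 3))"
proof (intro conjI allI impI; elim conjE)
  fix v :: "nat \<Rightarrow> complex" and w F
  assume "\<not> collinear {v 0, v 1, v 2}" "w > 0" "same_type F" "allowed v w F"
  thus "3 * sqrt 3 \<le> ribbonlength v w" by (rule ribbonlength_ge_of_same_type)
next
  fix v :: "nat \<Rightarrow> complex" and F
  assume "\<not> collinear {v 0, v 1, v 2}" "equilateral v" "same_type F"
  then interpret equilateral_triangle v by unfold_locales
  show "\<exists>w>0. allowed v w F \<and> ribbonlength v w = 3 * sqrt 3"
    using critical_width_pos allowed_critical_width[OF \<open>same_type F\<close>] ribbonlength_critical_width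
    by blast
qed

end
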